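(* Let $X=(X_k\xrightarrow{v^k}\cdots\xrightarrow{v^1}\langle1\rangle)$ and $Y=(Y_k\xrightarrow{u^k}\cdots\xrightarrow{u^1}\langle1\rangle)$ be $k$-stage level trees with crossings and let $\sigma=(\sigma_i\colon X_i\to Y_i)_{i}$ be an unordered isomorphism from $X$ to $Y$. Then the family $\overline{\sigma}$ (the same bijections $\sigma_i$, regarded as maps $\overline{X}_i\to\overline{Y}_i$) is an isomorphism of $k$-stage level trees $\overline{X}\to\overline{Y}$, i.e. every $\sigma_i\colon\overline{X}_i\to\overline{Y}_i$ is order preserving, if and only if each $\sigma_i$ is order preserving on the fibres of $v^i$, i.e. for all $a,b\in X_i$ with $v^i(a)=v^i(b)$ and $a<b$ in $X_i$ we have $\sigma_i(a)<\sigma_i(b)$ in $Y_i$.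
   Context: Write $\langle\ell\rangle=\{1<\dots<\ell\}$. A $k$-stage level tree with crossings is a diagram $X_k\xrightarrow{v^k}\cdots\xrightarrow{v^2}X_1\xrightarrow{v^1}\langle1\rangle$ of finite totally ordered sets and arbitrary (not necessarily order preserving) functions; it is a $k$-stage level tree if all maps are order preserving. An unordered isomorphism $X\to Y$ of $k$-stage level trees (with crossings) is a family of bijections $\sigma_i\colon X_i\to Y_i$ of underlying sets commuting with the structure maps ($u^i\sigma_i=\sigma_{i-1}v^i$, $\sigma_0=\mathrm{id}$); an isomorphism of $k$-stage level trees is an unordered isomorphism whose components are order preserving. For a $k$-stage level tree with crossings $X$, $\overline{X}$ is the diagram with the same underlying sets and maps and new orders defined inductively: $\overline{X}_1=X_1$, and $\overline{X}_{i+1}$ carries the unique total order making $v^{i+1}\times\mathrm{id}\colon\overline{X}_{i+1}\to\overline{X}_i\times X_{i+1}$ order preserving, where $\overline{X}_i\times X_{i+1}$ has the lexicographic order ($(a,b)\le(a',b')$ iff $a<a'$, or $a=a'$ and $b\le b'$). Then $\overline{X}$ is a $k$-stage level tree. *)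

theory Defs
  imports Main
begin

text \<open>Each finite totally ordered set X_i is
  represented (up to order isomorphism) by the standard ordinal {..<n i} with the
  usual order on nat; X_0 = <1> = {0}. The structure maps v i : X_i -> X_(i-1)
  (1 <= i <= k) are arbitrary functions.\<close>

definition level_tree_crossings :: "nat \<Rightarrow> (nat \<Rightarrow> nat) \<Rightarrow> (nat \<Rightarrow> nat \<Rightarrow> nat) \<Rightarrow> bool" where
  "level_tree_crossings k n v \<longleftrightarrow>
     n 0 = 1 \<and> (\<forall>i\<in>{1..k}. \<forall>a<n i. v i a < n (i - 1))"

definition unordered_iso ::
  "nat \<Rightarrow> (nat \<Rightarrow> nat) \<Rightarrow> (nat \<Rightarrow> nat \<Rightarrow> nat) \<Rightarrow> (nat \<Rightarrow> nat) \<Rightarrow> (nat \<Rightarrow> nat \<Rightarrow> nat)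
     \<Rightarrow> (nat \<Rightarrow> nat \<Rightarrow> nat) \<Rightarrow> bool" where
  "unordered_iso k n v m u \<sigma> \<longleftrightarrow>
     (\<forall>a<n 0. \<sigma> 0 a = a) \<and>
     (\<forall>i\<in>{1..k}. bij_betw (\<sigma> i) {..<n i} {..<m i}) \<and>
     (\<forall>i\<in>{1..k}. \<forall>a<n i. u i (\<sigma> i a) = \<sigma> (i - 1) (v i a))"

text \<open>The strict order of the level-tree X-bar: bar_X_1 = X_1 and bar_X_(i+1) is
  the pullback of the lexicographic order on bar_X_i x X_(i+1) along v^(i+1) x id.
  (Starting at level 0 = <1> gives exactly bar_X_1 = X_1.)\<close>

fun bar_less :: "(nat \<Rightarrow> nat \<Rightarrow> nat) \<Rightarrow> nat \<Rightarrow> nat \<Rightarrow> nat \<Rightarrow> bool" where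
  "bar_less v 0 a b \<longleftrightarrow> a < b"
| "bar_less v (Suc i) a b \<longleftrightarrow>
     bar_less v i (v (Suc i) a) (v (Suc i) b) \<or> (v (Suc i) a = v (Suc i) b \<and> a < b)"

definition bar_iso ::
  "nat \<Rightarrow> (nat \<Rightarrow> nat) \<Rightarrow> (nat \<Rightarrow> nat \<Rightarrow> nat) \<Rightarrow> (nat \<Rightarrow> nat \<Rightarrow> nat) \<Rightarrow> (nat \<Rightarrow> nat \<Rightarrow> nat) \<Rightarrow> bool" where
  "bar_iso k n v u \<sigma> \<longleftrightarrow>
     (\<forall>i\<in>{1..k}. \<forall>a<n i. \<forall>b<n i. bar_less v i a b \<longrightarrow> bar_less u i (\<sigma> i a) (\<sigma> i b))"

end

theory Submission
  imports Defs
begin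

text \<open>The order of \<open>X\<^bsub>i+1\<^esub>\<close>-bar compares images under \<open>v\<^bsup>i+1\<^esup>\<close> first and
  falls back to the order of \<open>X\<^bsub>i+1\<^esub>\<close> only inside a fibre, where it therefore agrees
  with the order of \<open>X\<^bsub>i+1\<^esub>\<close>. Since \<open>\<sigma>\<close> commutes with the structure maps, it maps
  fibres to fibres; so by induction on the level it preserves the bar orders exactly when it
  preserves the order inside every fibre.\<close>

lemma bar_less_irrefl: "\<not> bar_less v i a a"
  by (induction i arbitrary: a) auto

lemma bar_less_Suc_same_fibre:
  assumes "v (Suc i) a = v (Suc i) b"
  shows "bar_less v (Suc i) a b \<longleftrightarrow> a < b"
  using assms bar_less_irrefl by simp

lemma fibrewise_mono_if_bar_iso:
  assumes iso: "unordered_iso k n v m u \<sigma>"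
    and bar: "bar_iso k n v u \<sigma>"
  shows "\<forall>i\<in>{1..k}. \<forall>a<n i. \<forall>b<n i. v i a = v i b \<and> a < b \<longrightarrow> \<sigma> i a < \<sigma> i b"
proof (intro ballI allI impI)
  fix i a b
  assume i: "i \<in> {1..k}" and a: "a < n i" and b: "b < n i" and ab: "v i a = v i b \<and> a < b"
  then obtain j where j: "i = Suc j"
    by (cases i) auto
  have "bar_less v i a b"
    using ab j bar_less_Suc_same_fibre by metis
  then have "bar_less u i (\<sigma> i a) (\<sigma> i b)"
    using bar i a b unfolding bar_iso_def by blast
  moreover have "u i (\<sigma> i a) = u i (\<sigma> i b)"
    using iso i a b ab unfolding unordered_iso_def by metis
  ultimately show "\<sigma> i a < \<sigma> i b"
    using j bar_less_Suc_same_fibre by metis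
qed

lemma bar_iso_if_fibrewise_mono:
  assumes X: "level_tree_crossings k n v"
    and iso: "unordered_iso k n v m u \<sigma>"
    and fibrewise: "\<forall>i\<in>{1..k}. \<forall>a<n i. \<forall>b<n i. v i a = v i b \<and> a < b \<longrightarrow> \<sigma> i a < \<sigma> i b"
  shows "bar_iso k n v u \<sigma>"
proof -
  have "\<forall>a<n i. \<forall>b<n i. bar_less v i a b \<longrightarrow> bar_less u i (\<sigma> i a) (\<sigma> i b)"
    if "i \<le> k" for i
    using that
  proof (induction i)
    case 0
    then show ?case
      using iso unfolding unordered_iso_def by simp
  next
    case (Suc j)
    show ?case
    proof (intro allI impI)
      fix a b
      assume a: "a < n (Suc j)" and b: "b < n (Suc j)" and ab: "bar_less v (Suc j) a b"
      have i: "Suc j \<in> {1..k}"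
        using Suc.prems by simp
      have images: "v (Suc j) a < n j" "v (Suc j) b < n j"
        using X i a b unfolding level_tree_crossings_def by fastforce+
      have commute: "u (Suc j) (\<sigma> (Suc j) a) = \<sigma> j (v (Suc j) a)"
          "u (Suc j) (\<sigma> (Suc j) b) = \<sigma> j (v (Suc j) b)"
        using iso i a b unfolding unordered_iso_def by fastforce+
      from ab consider (across) "bar_less v j (v (Suc j) a) (v (Suc j) b)"
        | (within) "v (Suc j) a = v (Suc j) b" "a < b"
        by auto
      then show "bar_less u (Suc j) (\<sigma> (Suc j) a) (\<sigma> (Suc j) b)"
      proof cases
        case across
        then show ?thesis
          using Suc images commute by simp
      next
        case within
        then show ?thesis
          using fibrewise i a b commute by auto
      qed
    qed
  qed
  then show ?thesis
    unfolding bar_iso_def by auto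
qed

theorem mainTheorem4:
  assumes "level_tree_crossings k n v"
    and "level_tree_crossings k m u"
    and "unordered_iso k n v m u \<sigma>"
  shows "bar_iso k n v u \<sigma> \<longleftrightarrow>
    (\<forall>i\<in>{1..k}. \<forall>a<n i. \<forall>b<n i. v i a = v i b \<and> a < b \<longrightarrow> \<sigma> i a < \<sigma> i b)"
  using fibrewise_mono_if_bar_iso[OF assms(3)] bar_iso_if_fibrewise_mono[OF assms(1,3)] by blast

end
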